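(* Let $q=2^r$ with $r>1$ odd, and $n\ge 1$. Let $\alpha\in\mathbb{F}_q\setminus\{0,1\}$, and let $f\in\mathbb{F}_q[y]$ be a permutation polynomial of degree $q-2$. Then $$h(x_1,\dots,x_n,y)=\bigl(x_1^{q-1}\cdots x_n^{q-1}+\alpha\bigr)f(y)$$ is a permutation polynomial in $\mathbb{F}_q[x_1,\dots,x_n,y]$ of degree $n(q-1)+q-2$.
   Context: $\mathbb{F}_q$ is the finite field with $q$ elements. A polynomial in $m$ variables over $\mathbb{F}_q$ is a permutation polynomial (PP) if, for every $c\in\mathbb{F}_q$, the equation $h=c$ has exactly $q^{m-1}$ solutions in $\mathbb{F}_q^m$. A univariate PP is a polynomial inducing a bijection of $\mathbb{F}_q$. *)

theory Defs
  imports "HOL-Library.FuncSet" "HOL-Library.Cardinality" "HOL-Library.Poly_Mapping" "HOL-Computational_Algebra.Polynomial"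
begin

text \<open>Multivariate polynomials over a commutative ring, with variables of type 'v,
  represented as finitely supported maps from monomials (exponent vectors 'v =>0 nat)
  to coefficients.\<close>

type_synonym ('v, 'a) mpoly = "('v \<Rightarrow>\<^sub>0 nat) \<Rightarrow>\<^sub>0 'a"

definition mvar :: "'v \<Rightarrow> ('v, 'a::comm_semiring_1) mpoly" where
  "mvar v = Poly_Mapping.single (Poly_Mapping.single v 1) 1"

definition mconst :: "'a::comm_semiring_1 \<Rightarrow> ('v, 'a) mpoly" where
  "mconst c = Poly_Mapping.single 0 c"

text \<open>Total degree of a monomial and of a polynomial (degree of the zero polynomial is 0).\<close>
definition mon_deg :: "('v \<Rightarrow>\<^sub>0 nat) \<Rightarrow> nat" where
  "mon_deg m = (\<Sum>v\<in>Poly_Mapping.keys m. Poly_Mapping.lookup m v)"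

definition mtotal_degree :: "('v, 'a::zero) mpoly \<Rightarrow> nat" where
  "mtotal_degree p = (if p = 0 then 0 else Max (mon_deg ` Poly_Mapping.keys p))"

definition meval :: "('v, 'a::comm_semiring_1) mpoly \<Rightarrow> ('v \<Rightarrow> 'a) \<Rightarrow> 'a" where
  "meval p a = (\<Sum>m\<in>Poly_Mapping.keys p.
      Poly_Mapping.lookup p m * (\<Prod>v\<in>Poly_Mapping.keys m. a v ^ Poly_Mapping.lookup m v))"

definition poly_in_var :: "'v \<Rightarrow> 'a::comm_semiring_1 poly \<Rightarrow> ('v, 'a) mpoly" where
  "poly_in_var v f = (\<Sum>i\<le>Polynomial.degree f. mconst (coeff f i) * mvar v ^ i)"

definition is_mpp :: "'v set \<Rightarrow> ('v, 'a::{finite,field}) mpoly \<Rightarrow> bool" where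
  "is_mpp V h \<longleftrightarrow> (\<forall>c::'a. card {a \<in> PiE V (\<lambda>_. (UNIV::'a set)). meval h a = c}
                               = card (UNIV::'a set) ^ (card V - 1))"

end

theory Submission
  imports Defs "HOL-Number_Theory.Residues"
begin

text \<open>By Fermat's little theorem in \<open>F_q\<close>, the factor \<open>k(x) = x_1^(q-1)\<cdots>x_n^(q-1) + \<alpha>\<close> takes only
  the values \<open>\<alpha>\<close> and \<open>1 + \<alpha>\<close>, and neither vanishes since \<open>\<alpha> \<notin> {0,1}\<close> and \<open>-1 = 1\<close> in
  characteristic 2. Hence for each fixed \<open>x\<close> the map \<open>y \<mapsto> k(x) f(y)\<close> is a bijection of \<open>F_q\<close>, and
  every value of \<open>h\<close> is taken exactly \<open>q^n\<close> times. The total degree is attained by the monomial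
  \<open>x_1^(q-1)\<cdots>x_n^(q-1) y^(q-2)\<close>, whose coefficient is the leading coefficient of \<open>f\<close>.\<close>

section \<open>Evaluation of multivariate polynomials\<close>

definition eval_monomial :: "('v \<Rightarrow>\<^sub>0 nat) \<Rightarrow> ('v \<Rightarrow> 'a::comm_semiring_1) \<Rightarrow> 'a" where
  "eval_monomial m a = (\<Prod>v\<in>Poly_Mapping.keys m. a v ^ Poly_Mapping.lookup m v)"

lemma eval_monomial_superset:
  assumes "finite S" "Poly_Mapping.keys m \<subseteq> S"
  shows "eval_monomial m a = (\<Prod>v\<in>S. a v ^ Poly_Mapping.lookup m v)"
  unfolding eval_monomial_def using assms
  by (intro prod.mono_neutral_left) (auto simp: in_keys_iff)

lemma eval_monomial_add: "eval_monomial (m1 + m2) a = eval_monomial m1 a * eval_monomial m2 a"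
proof -
  let ?S = "Poly_Mapping.keys m1 \<union> Poly_Mapping.keys m2"
  have "eval_monomial (m1 + m2) a = (\<Prod>v\<in>?S. a v ^ Poly_Mapping.lookup (m1 + m2) v)"
    by (simp add: eval_monomial_superset keys_add)
  also have "\<dots> = (\<Prod>v\<in>?S. a v ^ Poly_Mapping.lookup m1 v) * (\<Prod>v\<in>?S. a v ^ Poly_Mapping.lookup m2 v)"
    by (simp add: lookup_add power_add prod.distrib)
  also have "\<dots> = eval_monomial m1 a * eval_monomial m2 a"
    by (simp add: eval_monomial_superset[of ?S])
  finally show ?thesis .
qed

lemma meval_eq_sum_eval_monomial:
  "meval p a = (\<Sum>m\<in>Poly_Mapping.keys p. Poly_Mapping.lookup p m * eval_monomial m a)"
  by (simp add: meval_def eval_monomial_def)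

lemma meval_superset:
  assumes "finite S" "Poly_Mapping.keys p \<subseteq> S"
  shows "meval p a = (\<Sum>m\<in>S. Poly_Mapping.lookup p m * eval_monomial m a)"
  unfolding meval_eq_sum_eval_monomial using assms
  by (intro sum.mono_neutral_left) (auto simp: in_keys_iff)

lemma meval_add: "meval (p + q) a = meval p a + meval q a"
proof -
  let ?S = "Poly_Mapping.keys p \<union> Poly_Mapping.keys q"
  have "meval (p + q) a = (\<Sum>m\<in>?S. Poly_Mapping.lookup (p + q) m * eval_monomial m a)"
    by (simp add: meval_superset keys_add)
  also have "\<dots> = (\<Sum>m\<in>?S. Poly_Mapping.lookup p m * eval_monomial m a)
                  + (\<Sum>m\<in>?S. Poly_Mapping.lookup q m * eval_monomial m a)"
    by (simp add: lookup_add distrib_right sum.distrib)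
  also have "\<dots> = meval p a + meval q a"
    by (simp add: meval_superset[of ?S])
  finally show ?thesis .
qed

lemma meval_zero [simp]: "meval 0 a = 0"
  by (simp add: meval_def)

lemma meval_sum: "meval (sum g I) a = (\<Sum>i\<in>I. meval (g i) a)"
  by (induction I rule: infinite_finite_induct) (auto simp: meval_add)

lemma meval_single [simp]: "meval (Poly_Mapping.single m c) a = c * eval_monomial m a"
  by (simp add: meval_eq_sum_eval_monomial)

lemma poly_mapping_sum_single_lookup:
  "p = (\<Sum>m\<in>Poly_Mapping.keys p. Poly_Mapping.single m (Poly_Mapping.lookup p m))"
  by (rule poly_mapping_eqI)
    (auto simp: lookup_sum lookup_single when_def in_keys_iff sum.delta_remove)

lemma meval_mult: "meval (p * q) a = meval p a * meval q a"
proof -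
  have "p * q = (\<Sum>m\<in>Poly_Mapping.keys p. \<Sum>m'\<in>Poly_Mapping.keys q.
      Poly_Mapping.single m (Poly_Mapping.lookup p m) * Poly_Mapping.single m' (Poly_Mapping.lookup q m'))"
    by (subst poly_mapping_sum_single_lookup[of p], subst poly_mapping_sum_single_lookup[of q])
      (simp only: sum_product)
  then have "meval (p * q) a = (\<Sum>m\<in>Poly_Mapping.keys p. \<Sum>m'\<in>Poly_Mapping.keys q.
      (Poly_Mapping.lookup p m * eval_monomial m a) * (Poly_Mapping.lookup q m' * eval_monomial m' a))"
    by (simp add: meval_sum mult_single eval_monomial_add mult_ac)
  also have "\<dots> = meval p a * meval q a"
    unfolding meval_eq_sum_eval_monomial by (simp only: sum_product)
  finally show ?thesis .
qed

lemma meval_one [simp]: "meval 1 a = 1"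
  by (simp add: meval_eq_sum_eval_monomial eval_monomial_def)

lemma meval_power: "meval (p ^ k) a = meval p a ^ k"
  by (induction k) (auto simp: meval_mult)

lemma meval_prod: "meval (\<Prod>i\<in>I. g i) a = (\<Prod>i\<in>I. meval (g i) a)"
  by (induction I rule: infinite_finite_induct) (auto simp: meval_mult)

lemma meval_mvar [simp]: "meval (mvar v) a = a v"
  by (simp add: mvar_def eval_monomial_def)

lemma meval_mconst [simp]: "meval (mconst c) a = c"
  by (simp add: mconst_def eval_monomial_def)

lemma meval_poly_in_var [simp]: "meval (poly_in_var v f) a = poly f (a v)"
  by (simp add: poly_in_var_def meval_sum meval_mult meval_power poly_altdef)

section \<open>Monomials and total degree\<close>

lemma mvar_power: "mvar v ^ k = Poly_Mapping.single (Poly_Mapping.single v k) 1"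
  by (induction k) (simp_all add: mvar_def mult_single single_add[symmetric] add.commute)

lemma prod_mvar_power:
  "(\<Prod>i\<in>I. mvar i ^ k) = Poly_Mapping.single (\<Sum>i\<in>I. Poly_Mapping.single i k) 1"
  by (induction I rule: infinite_finite_induct) (simp_all add: mvar_power mult_single add.commute)

lemma lookup_sum_single_const:
  "finite I \<Longrightarrow> Poly_Mapping.lookup (\<Sum>i\<in>I. Poly_Mapping.single i k) j = (if j \<in> I then k else 0)"
  by (simp add: lookup_sum lookup_single when_def)

lemma keys_sum_single_const:
  "finite I \<Longrightarrow> k \<noteq> 0 \<Longrightarrow> Poly_Mapping.keys (\<Sum>i\<in>I. Poly_Mapping.single i k) = I"
  by (auto simp: in_keys_iff lookup_sum_single_const split: if_splits)

lemma mon_deg_sum_single_const: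
  "finite I \<Longrightarrow> mon_deg (\<Sum>i\<in>I. Poly_Mapping.single i k) = card I * k"
  by (cases "k = 0") (simp_all add: mon_deg_def keys_sum_single_const lookup_sum_single_const)

lemma mon_deg_add: "mon_deg (m1 + m2) = mon_deg m1 + mon_deg m2"
proof -
  let ?S = "Poly_Mapping.keys m1 \<union> Poly_Mapping.keys m2"
  have mon_deg_superset: "mon_deg m = (\<Sum>v\<in>?S. Poly_Mapping.lookup m v)"
    if "Poly_Mapping.keys m \<subseteq> ?S" for m
    unfolding mon_deg_def using that by (intro sum.mono_neutral_left) (auto simp: in_keys_iff)
  have "mon_deg (m1 + m2) = (\<Sum>v\<in>?S. Poly_Mapping.lookup (m1 + m2) v)"
    by (simp add: mon_deg_superset keys_add)
  also have "\<dots> = mon_deg m1 + mon_deg m2"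
    by (simp add: mon_deg_superset lookup_add sum.distrib)
  finally show ?thesis .
qed

lemma mon_deg_single [simp]: "mon_deg (Poly_Mapping.single v k) = k"
  by (simp add: mon_deg_def)

lemma mtotal_degree_eqI:
  assumes "\<And>m. m \<in> Poly_Mapping.keys p \<Longrightarrow> mon_deg m \<le> d"
    and "m \<in> Poly_Mapping.keys p" and "mon_deg m = d"
  shows "mtotal_degree p = d"
proof -
  have "p \<noteq> 0" using assms(2) by auto
  then show ?thesis
    unfolding mtotal_degree_def using assms by (auto intro!: Max_eqI)
qed

lemma mtotal_degree_monomial_plus_const_mult_poly_in_var:
  fixes f :: "'a::idom poly"
  assumes "v \<notin> Poly_Mapping.keys M" "M \<noteq> 0" "f \<noteq> 0"
  shows "mtotal_degree ((Poly_Mapping.single M 1 + mconst \<alpha>) * poly_in_var v f)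
           = mon_deg M + degree f"
proof -
  let ?d = "degree f" and ?y = "Poly_Mapping.single v"
  define A where "A = (\<Sum>i\<le>?d. Poly_Mapping.single (M + ?y i) (Polynomial.coeff f i))"
  define B where "B = (\<Sum>i\<le>?d. Poly_Mapping.single (?y i) (\<alpha> * Polynomial.coeff f i))"
  have expand: "(Poly_Mapping.single M 1 + mconst \<alpha>) * poly_in_var v f = A + B"
    by (simp add: A_def B_def poly_in_var_def mvar_power mconst_def mult_single distrib_right
        sum_distrib_left sum.distrib)
  have keys_A: "Poly_Mapping.keys A \<subseteq> (\<lambda>i. M + ?y i) ` {..?d}"
    unfolding A_def by (rule order.trans[OF keys_sum]) (auto split: if_splits)
  have keys_B: "Poly_Mapping.keys B \<subseteq> ?y ` {..?d}"
    unfolding B_def by (rule order.trans[OF keys_sum]) (auto split: if_splits)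
  define K where "K = M + ?y ?d"
  have K_not_pure: "?y i \<noteq> K" for i
  proof
    assume "?y i = K"
    then have "Poly_Mapping.lookup M u = 0" for u
      using assms(1) by (cases "u = v") (auto simp: K_def in_keys_iff lookup_add lookup_single
          dest!: arg_cong[where f="\<lambda>m. Poly_Mapping.lookup m u"])
    then show False using assms(2) by (simp add: poly_mapping_eqI)
  qed
  have single_v_eq_iff: "?y i = ?y j \<longleftrightarrow> i = j" for i j
    by (metis lookup_single_eq)
  have "Poly_Mapping.lookup (A + B) K = lead_coeff f"
    by (simp add: A_def B_def K_def lookup_add lookup_sum lookup_single when_def single_v_eq_iff
        K_not_pure[unfolded K_def])
  then have K_key: "K \<in> Poly_Mapping.keys (A + B)"
    using assms(3) by (simp add: in_keys_iff)
  show ?thesis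
    unfolding expand
  proof (rule mtotal_degree_eqI[OF _ K_key])
    fix m assume "m \<in> Poly_Mapping.keys (A + B)"
    then have "m \<in> (\<lambda>i. M + ?y i) ` {..?d} \<union> ?y ` {..?d}"
      using keys_add[of A B] keys_A keys_B by blast
    then show "mon_deg m \<le> mon_deg M + ?d"
      by (auto simp: mon_deg_add)
  qed (simp add: K_def mon_deg_add)
qed

lemma mtotal_degree_prod_mvar_power_plus_const_mult_poly_in_var:
  fixes f :: "'a::idom poly"
  assumes "finite I" "I \<noteq> {}" "v \<notin> I" "k \<noteq> 0" "f \<noteq> 0"
  shows "mtotal_degree (((\<Prod>i\<in>I. mvar i ^ k) + mconst \<alpha>) * poly_in_var v f) = card I * k + degree f"
proof -
  let ?M = "\<Sum>i\<in>I. Poly_Mapping.single i k"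
  obtain i where "i \<in> I" using assms(2) by blast
  then have "Poly_Mapping.lookup ?M i \<noteq> 0"
    using assms(1,4) by (simp add: lookup_sum_single_const)
  then have "?M \<noteq> 0" by auto
  with assms show ?thesis
    by (simp add: prod_mvar_power mtotal_degree_monomial_plus_const_mult_poly_in_var
        keys_sum_single_const mon_deg_sum_single_const)
qed

section \<open>Finite fields\<close>

lemma card_field_ge_2: "CARD('a::{finite,field}) \<ge> 2"
proof -
  have "card {0, 1::'a} \<le> CARD('a)" by (rule card_mono) auto
  then show ?thesis by simp
qed

lemma power_card_minus_one_eq_1:
  fixes x :: "'a::{finite,field}"
  assumes "x \<noteq> 0"
  shows "x ^ (CARD('a) - 1) = 1"
proof -
  let ?U = "UNIV - {0::'a}"
  have "bij_betw ((*) x) ?U ?U"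
    by (rule bij_betwI[where g="\<lambda>y. y / x"]) (use assms in auto)
  from prod.reindex_bij_betw[OF this, of id]
  have "prod id ?U = (\<Prod>y\<in>?U. x * y)"
    by simp
  also have "\<dots> = x ^ card ?U * prod id ?U"
    by (simp add: prod.distrib)
  finally have "prod id ?U = x ^ card ?U * prod id ?U" .
  moreover have "prod id ?U \<noteq> 0"
    by simp
  ultimately have "x ^ card ?U = 1"
    by (metis mult_cancel_right1)
  moreover have "card ?U = CARD('a) - 1"
    by (simp add: card_Diff_subset)
  ultimately show ?thesis by simp
qed

lemma prod_power_card_minus_one:
  fixes x :: "'i \<Rightarrow> 'a::{finite,field}"
  assumes "finite I"
  shows "(\<Prod>i\<in>I. x i ^ (CARD('a) - 1)) = (if \<forall>i\<in>I. x i \<noteq> 0 then 1 else 0)"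
proof (cases "\<forall>i\<in>I. x i \<noteq> 0")
  case True
  then have "(\<Prod>i\<in>I. x i ^ (CARD('a) - 1)) = 1"
    by (intro prod.neutral ballI power_card_minus_one_eq_1) auto
  with True show ?thesis by simp
next
  case False
  moreover have "CARD('a) - 1 \<noteq> 0"
    using card_field_ge_2[where 'a='a] by simp
  ultimately show ?thesis
    using assms by (auto simp: prod_zero_iff)
qed

lemma CHAR_eq_prime_if_CARD_prime_power:
  assumes "CARD('a::{finite,field}) = p ^ r" "prime p" "r > 0"
  shows "CHAR('a) = p"
proof -
  have "prime CHAR('a)"
    by (intro prime_CHAR_semidom finite_imp_CHAR_pos) simp
  moreover have "CHAR('a) dvd p ^ r"
    using CHAR_dvd_CARD[where 'a='a] assms(1) by simp
  ultimately show ?thesis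
    using assms(2) by (metis prime_dvd_power primes_dvd_imp_eq)
qed

lemma prod_power_card_minus_one_plus_nonzero:
  fixes x :: "'i \<Rightarrow> 'a::{finite,field}"
  assumes "CHAR('a) = 2" "\<alpha> \<noteq> 0" "\<alpha> \<noteq> 1" "finite I"
  shows "(\<Prod>i\<in>I. x i ^ (CARD('a) - 1)) + \<alpha> \<noteq> 0"
proof
  assume "(\<Prod>i\<in>I. x i ^ (CARD('a) - 1)) + \<alpha> = 0"
  then have "\<alpha> = - (\<Prod>i\<in>I. x i ^ (CARD('a) - 1))"
    by (simp add: add_eq_0_iff)
  also have "\<dots> = (\<Prod>i\<in>I. x i ^ (CARD('a) - 1))"
    using assms(1) by (rule uminus_CHAR_2)
  finally show False
    using assms(2,3) prod_power_card_minus_one[OF assms(4), of x] by (auto split: if_splits)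
qed

section \<open>Permutation polynomials\<close>

lemma card_fibre_mult_bij_fresh_coordinate:
  fixes k :: "('v \<Rightarrow> 'a::{finite,field}) \<Rightarrow> 'a"
  assumes "finite V" "v \<notin> V" "bij \<pi>"
    and k_nonzero: "\<And>a. k a \<noteq> 0"
    and k_local: "\<And>a b. (\<And>u. u \<in> V \<Longrightarrow> a u = b u) \<Longrightarrow> k a = k b"
  shows "card {a \<in> PiE (insert v V) (\<lambda>_. UNIV). k a * \<pi> (a v) = c} = CARD('a) ^ card V"
proof -
  define extend where "extend x = x(v := inv_into UNIV \<pi> (c / k x))" for x
  have k_extend: "k (extend x) = k x" for x
    using assms(2) by (intro k_local) (auto simp: extend_def)
  have fibre_eq: "{a \<in> PiE (insert v V) (\<lambda>_. UNIV). k a * \<pi> (a v) = c} = extend ` PiE V (\<lambda>_. UNIV)"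
  proof (intro equalityI subsetI)
    fix a assume a: "a \<in> {a \<in> PiE (insert v V) (\<lambda>_. UNIV). k a * \<pi> (a v) = c}"
    let ?x = "restrict a V"
    have "k ?x = k a" by (intro k_local) simp
    moreover have "a v = inv_into UNIV \<pi> (c / k a)"
      using a k_nonzero[of a] assms(3) by (auto simp: bij_inv_eq_iff field_simps)
    ultimately have "a = extend ?x"
      using a assms(2) by (auto simp: extend_def PiE_def extensional_def)
    then show "a \<in> extend ` PiE V (\<lambda>_. UNIV)" by auto
  next
    fix a assume "a \<in> extend ` PiE V (\<lambda>_. UNIV)"
    then obtain x where x: "x \<in> PiE V (\<lambda>_. UNIV)" and a: "a = extend x" by blast
    have "\<pi> (inv_into UNIV \<pi> y) = y" for y
      using assms(3) by (simp add: bij_is_surj surj_f_inv_f)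
    then show "a \<in> {a \<in> PiE (insert v V) (\<lambda>_. UNIV). k a * \<pi> (a v) = c}"
      using x k_nonzero[of x] k_extend[of x, unfolded extend_def] unfolding a
      by (auto simp: extend_def PiE_def extensional_def)
  qed
  have "inj_on extend (PiE V (\<lambda>_. UNIV))"
  proof (rule inj_onI, rule ext)
    fix x y i
    assume x: "x \<in> PiE V (\<lambda>_. UNIV)" and y: "y \<in> PiE V (\<lambda>_. UNIV)"
      and eq: "extend x = extend y"
    show "x i = y i"
    proof (cases "i = v")
      case True
      then show ?thesis using x y assms(2) by (auto simp: PiE_def extensional_def)
    next
      case False
      then show ?thesis using fun_cong[OF eq, of i] by (simp add: extend_def)
    qed
  qed
  then have "card {a \<in> PiE (insert v V) (\<lambda>_. UNIV). k a * \<pi> (a v) = c}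
               = card (PiE V (\<lambda>_. UNIV :: 'a set))"
    unfolding fibre_eq by (rule card_image)
  also have "\<dots> = CARD('a) ^ card V"
    using assms(1) by (simp add: card_PiE prod_constant)
  finally show ?thesis .
qed

lemma is_mpp_mult_poly_in_fresh_var:
  fixes g :: "('v, 'a::{finite,field}) mpoly"
  assumes "finite V" "v \<notin> V" "bij (poly f)"
    and "\<And>a. meval g a \<noteq> 0"
    and "\<And>a b. (\<And>u. u \<in> V \<Longrightarrow> a u = b u) \<Longrightarrow> meval g a = meval g b"
  shows "is_mpp (insert v V) (g * poly_in_var v f)"
proof (unfold is_mpp_def, intro allI)
  fix c
  have "card {a \<in> PiE (insert v V) (\<lambda>_. UNIV). meval (g * poly_in_var v f) a = c}
          = card {a \<in> PiE (insert v V) (\<lambda>_. UNIV). meval g a * poly f (a v) = c}"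
    by (simp only: meval_mult meval_poly_in_var)
  also have "\<dots> = CARD('a) ^ card V"
    by (rule card_fibre_mult_bij_fresh_coordinate[OF assms])
  also have "card V = card (insert v V) - 1"
    using assms(1,2) by simp
  finally show "card {a \<in> PiE (insert v V) (\<lambda>_. UNIV). meval (g * poly_in_var v f) a = c}
                  = CARD('a) ^ (card (insert v V) - 1)" .
qed

lemma is_mpp_prod_power_card_minus_one_plus_const_mult:
  fixes f :: "'a::{finite,field} poly"
  assumes "CHAR('a) = 2" "\<alpha> \<noteq> 0" "\<alpha> \<noteq> 1" "finite I" "v \<notin> I" "bij (poly f)"
  shows "is_mpp (insert v I) (((\<Prod>i\<in>I. mvar i ^ (CARD('a) - 1)) + mconst \<alpha>) * poly_in_var v f)"
proof (rule is_mpp_mult_poly_in_fresh_var)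
  have meval_factor: "meval ((\<Prod>i\<in>I. mvar i ^ (CARD('a) - 1)) + mconst \<alpha>) a
                        = (\<Prod>i\<in>I. a i ^ (CARD('a) - 1)) + \<alpha>" for a
    by (simp add: meval_add meval_prod meval_power)
  show "meval ((\<Prod>i\<in>I. mvar i ^ (CARD('a) - 1)) + mconst \<alpha>) a \<noteq> 0" for a
    unfolding meval_factor using assms(1-4) by (rule prod_power_card_minus_one_plus_nonzero)
  show "meval ((\<Prod>i\<in>I. mvar i ^ (CARD('a) - 1)) + mconst \<alpha>) a
          = meval ((\<Prod>i\<in>I. mvar i ^ (CARD('a) - 1)) + mconst \<alpha>) b"
    if "\<And>u. u \<in> I \<Longrightarrow> a u = b u" for a b
    unfolding meval_factor using that by (metis (no_types, lifting) prod.cong)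
qed (use assms in auto)

theorem mainTheorem8:
  fixes f :: "'a::{finite,field} poly" and \<alpha> :: 'a and r n :: nat
    and h :: "(nat, 'a) mpoly"
  assumes "CARD('a) = 2 ^ r" and "odd r" and "r > 1" and "n \<ge> 1"
    and "\<alpha> \<noteq> 0" and "\<alpha> \<noteq> 1"
    and "bij (poly f)" and "Polynomial.degree f = CARD('a) - 2"
    and "h = ((\<Prod>i<n. mvar i ^ (CARD('a) - 1)) + mconst \<alpha>) * poly_in_var n f"
  shows "is_mpp {0..n} h \<and> mtotal_degree h = n * (CARD('a) - 1) + (CARD('a) - 2)"
proof
  have "CHAR('a) = 2"
    using assms(1,3) by (intro CHAR_eq_prime_if_CARD_prime_power) auto
  then have "is_mpp (insert n {..<n}) h"
    unfolding assms(9) using assms(5-7) by (intro is_mpp_prod_power_card_minus_one_plus_const_mult) auto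
  moreover have "insert n {..<n} = {0..n}" by auto
  ultimately show "is_mpp {0..n} h" by simp
next
  have "f \<noteq> 0"
    using assms(7) by (metis bij_is_inj injD poly_0 zero_neq_one)
  moreover have "CARD('a) - 1 \<noteq> 0"
    using card_field_ge_2[where 'a='a] by simp
  ultimately show "mtotal_degree h = n * (CARD('a) - 1) + (CARD('a) - 2)"
    unfolding assms(9) using assms(4,8)
    by (subst mtotal_degree_prod_mvar_power_plus_const_mult_poly_in_var) (auto simp: lessThan_empty_iff)
qed

end
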